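(* Let $n\in\mathbb N$, $B\in\mathcal S_n(\mathcal H)$, $J:\mathbb C^n\to\ker(B^*+i)$ an isometry, $U\in\mathrm{Ext}(B)$, and let $K_w(z)=\Omega(z)^*\Omega(w)$ with $\Omega(z)=2i\big((i-\bar z)+(i+\bar z)U\big)^{-1}J$. Then for every $z\in\mathbb C_+$ (at which the inverses exist) $$b(z)\,K_{\bar z}(-i)^{-1}K_{\bar z}(i)=\Phi[U;B](z)=b(z)\,K_i(z)^{-1}K_{-i}(z).$$
   Context: For a separable Hilbert space $\mathcal H$ and $n\in\mathbb N$, $\mathcal S_n(\mathcal H)$ is the set of linear transformations with domain in $\mathcal H$ (not necessarily dense) that are symmetric, closed, simple and have deficiency indices $(n,n)$. $\ker(B^*-z):=\mathrm{ran}(B-\bar z)^\perp$, $b(z)=\frac{z-i}{z+i}$, $b(B)=(B-i)(B+i)^{-1}$. $\mathrm{Ext}(B)$ is the set of unitaries $U$ on Hilbert spaces $\mathcal K\supseteq\mathcal H$ agreeing with $b(B)$ on $\mathrm{ran}(B+i)$ with $\mathcal K$ the smallest $U$-reducing subspace containing $\mathcal H$. For $U\in\mathrm{Ext}(B)$ with spectral measure $P_U$ on $\mathbb T$, $G_U(z)=\int_{\mathbb T}\frac{\alpha+b(z)}{\alpha-b(z)}J^*P_U(d\alpha)J$ and $\Phi[U;B]=(G_U-1)(G_U+1)^{-1}$ on $\mathbb C_+$. *)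

theory Defs
  imports "HOL-Analysis.Analysis"
begin

text \<open>The library has no complex inner product spaces, so we introduce a type class.
  The inner product is linear in the second and conjugate-linear in the first argument.
  A complex Hilbert space is a type of class cvec that is also a complete_space.\<close>

class cvec = real_normed_vector +
  fixes scaleC :: "complex \<Rightarrow> 'a \<Rightarrow> 'a"
  fixes cinner :: "'a \<Rightarrow> 'a \<Rightarrow> complex"
  assumes scaleC_add_right: "scaleC a (x + y) = scaleC a x + scaleC a y"
    and scaleC_add_left: "scaleC (a + b) x = scaleC a x + scaleC b x"
    and scaleC_scaleC: "scaleC a (scaleC b x) = scaleC (a * b) x"
    and scaleC_one: "scaleC 1 x = x"
    and scaleC_of_real: "scaleC (complex_of_real r) x = r *\<^sub>R x"
    and cinner_commute: "cinner x y = cnj (cinner y x)"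
    and cinner_add_right: "cinner x (y + z) = cinner x y + cinner x z"
    and cinner_scaleC_right: "cinner x (scaleC a y) = a * cinner x y"
    and cinner_self: "cinner x x = complex_of_real ((norm x)\<^sup>2)"

instantiation complex :: cvec
begin
definition scaleC_complex :: "complex \<Rightarrow> complex \<Rightarrow> complex" where "scaleC_complex a x = a * x"
definition cinner_complex :: "complex \<Rightarrow> complex \<Rightarrow> complex" where "cinner_complex x y = cnj x * y"
instance
proof
  fix a b x y z :: complex and r :: real
  show "scaleC a (x + y) = scaleC a x + scaleC a y" by (simp add: scaleC_complex_def distrib_left)
  show "scaleC (a + b) x = scaleC a x + scaleC b x" by (simp add: scaleC_complex_def distrib_right)
  show "scaleC a (scaleC b x) = scaleC (a * b) x" by (simp add: scaleC_complex_def mult.assoc)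
  show "scaleC 1 x = x" by (simp add: scaleC_complex_def)
  show "scaleC (complex_of_real r) x = r *\<^sub>R x" by (simp add: scaleC_complex_def scaleR_conv_of_real)
  show "cinner x y = cnj (cinner y x)" by (simp add: cinner_complex_def mult.commute)
  show "cinner x (y + z) = cinner x y + cinner x z" by (simp add: cinner_complex_def distrib_left)
  show "cinner x (scaleC a y) = a * cinner x y" by (simp add: cinner_complex_def scaleC_complex_def)
  show "cinner x x = complex_of_real ((norm x)\<^sup>2)" using complex_norm_square[of x] by (simp add: cinner_complex_def mult.commute)
qed
end

definition separable_hilbert :: "'a::{cvec, complete_space} itself \<Rightarrow> bool" where
  "separable_hilbert _ \<longleftrightarrow> (\<exists>S :: 'a set. countable S \<and> closure S = UNIV)"

definition csubspace :: "'a::cvec set \<Rightarrow> bool" where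
  "csubspace M \<longleftrightarrow> 0 \<in> M \<and> (\<forall>x\<in>M. \<forall>y\<in>M. x + y \<in> M) \<and> (\<forall>c. \<forall>x\<in>M. scaleC c x \<in> M)"

definition clinear :: "('a::cvec \<Rightarrow> 'b::cvec) \<Rightarrow> bool" where
  "clinear f \<longleftrightarrow> (\<forall>x y. f (x + y) = f x + f y) \<and> (\<forall>c x. f (scaleC c x) = scaleC c (f x))"

definition clinear_on :: "'a::cvec set \<Rightarrow> ('a \<Rightarrow> 'b::cvec) \<Rightarrow> bool" where
  "clinear_on D f \<longleftrightarrow> csubspace D \<and> (\<forall>x\<in>D. \<forall>y\<in>D. f (x + y) = f x + f y)
      \<and> (\<forall>c. \<forall>x\<in>D. f (scaleC c x) = scaleC c (f x))"

definition has_cdim :: "'a::cvec set \<Rightarrow> nat \<Rightarrow> bool" where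
  "has_cdim V m \<longleftrightarrow> (\<exists>f :: nat \<Rightarrow> 'a.
      (\<forall>i<m. \<forall>j<m. cinner (f i) (f j) = (if i = j then 1 else 0)) \<and>
      V = {\<Sum>i<m. scaleC (c i) (f i) | c. True})"

text \<open>An operator is given by its domain D and its action B on D.
  ker(B^* - z) := ran(B - conj z)^perp.\<close>
definition defect :: "'a::cvec set \<Rightarrow> ('a \<Rightarrow> 'a) \<Rightarrow> complex \<Rightarrow> 'a set" where
  "defect D B z = {y. \<forall>x\<in>D. cinner (B x - scaleC (cnj z) x) y = 0}"

definition symmetric_op :: "'a::cvec set \<Rightarrow> ('a \<Rightarrow> 'a) \<Rightarrow> bool" where
  "symmetric_op D B \<longleftrightarrow> (\<forall>x\<in>D. \<forall>y\<in>D. cinner (B x) y = cinner x (B y))"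

definition closed_op :: "'a::cvec set \<Rightarrow> ('a \<Rightarrow> 'a) \<Rightarrow> bool" where
  "closed_op D B \<longleftrightarrow> closed {(x, B x) | x. x \<in> D}"

definition reduces_op :: "'a::cvec set \<Rightarrow> ('a \<Rightarrow> 'a) \<Rightarrow> 'a set \<Rightarrow> bool" where
  "reduces_op D B M \<longleftrightarrow> (\<forall>x\<in>D. \<exists>m m'. x = m + m' \<and> m \<in> M \<and> (\<forall>u\<in>M. cinner u m' = 0)
       \<and> m \<in> D \<and> B m \<in> M \<and> (\<forall>u\<in>M. cinner u (B m') = 0))"

text \<open>The part of B in M is self-adjoint (as an operator in the Hilbert space M):
  the graph of its adjoint in M equals its graph.\<close>
definition selfadjoint_part :: "'a::cvec set \<Rightarrow> ('a \<Rightarrow> 'a) \<Rightarrow> 'a set \<Rightarrow> bool" where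
  "selfadjoint_part D B M \<longleftrightarrow>
     {(y, w). y \<in> M \<and> w \<in> M \<and> (\<forall>x\<in>D \<inter> M. cinner (B x) y = cinner x w)}
       = {(x, B x) | x. x \<in> D \<inter> M}"

definition simple_op :: "'a::cvec set \<Rightarrow> ('a \<Rightarrow> 'a) \<Rightarrow> bool" where
  "simple_op D B \<longleftrightarrow> (\<forall>M. csubspace M \<and> closed M \<and> M \<noteq> {0} \<and> reduces_op D B M
       \<longrightarrow> \<not> selfadjoint_part D B M)"

definition in_S :: "nat \<Rightarrow> 'a::{cvec, complete_space} set \<Rightarrow> ('a \<Rightarrow> 'a) \<Rightarrow> bool" where
  "in_S n D B \<longleftrightarrow> clinear_on D B \<and> symmetric_op D B \<and> closed_op D B \<and> simple_op D B
     \<and> has_cdim (defect D B \<i>) n \<and> has_cdim (defect D B (- \<i>)) n"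

definition unitary_op :: "('a::cvec \<Rightarrow> 'a) \<Rightarrow> bool" where
  "unitary_op U \<longleftrightarrow> clinear U \<and> bij U \<and> (\<forall>x. norm (U x) = norm x)"

text \<open>The inclusion H \<subseteq> K is an isometric linear embedding emb.  U is in Ext(B) if it is
  unitary on K, agrees with b(B) = (B - i)(B + i)^-1 on ran(B + i), and K is the smallest
  U-reducing (closed) subspace containing H.\<close>
definition in_Ext :: "'a::{cvec, complete_space} set \<Rightarrow> ('a \<Rightarrow> 'a) \<Rightarrow> ('a \<Rightarrow> 'k::{cvec, complete_space})
     \<Rightarrow> ('k \<Rightarrow> 'k) \<Rightarrow> bool" where
  "in_Ext D B emb U \<longleftrightarrow> clinear emb \<and> (\<forall>x. norm (emb x) = norm x) \<and> unitary_op U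
     \<and> (\<forall>x\<in>D. U (emb (B x + scaleC \<i> x)) = emb (B x - scaleC \<i> x))
     \<and> (\<forall>M. csubspace M \<and> closed M \<and> range emb \<subseteq> M \<and> U ` M \<subseteq> M \<and> inv U ` M \<subseteq> M
            \<longrightarrow> M = UNIV)"

abbreviation circ :: "complex set" where "circ \<equiv> sphere 0 1"

definition circ_sets :: "complex set set" where
  "circ_sets = sets (restrict_space borel circ)"

text \<open>Scalar measure A \<mapsto> <x, P(A) x> = |P(A) x|^2.\<close>
definition scalar_meas :: "(complex set \<Rightarrow> 'k::cvec \<Rightarrow> 'k) \<Rightarrow> 'k \<Rightarrow> complex measure" where
  "scalar_meas P x = measure_of circ circ_sets (\<lambda>A. ennreal ((norm (P A x))\<^sup>2))"

text \<open>Integral of f against the complex measure A \<mapsto> <x, P(A) y>, via polarization.\<close>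
definition spec_integral ::
    "(complex set \<Rightarrow> 'k::cvec \<Rightarrow> 'k) \<Rightarrow> (complex \<Rightarrow> complex) \<Rightarrow> 'k \<Rightarrow> 'k \<Rightarrow> complex" where
  "spec_integral P f x y =
     (\<Sum>k<(4::nat). cnj (\<i> ^ k) * integral\<^sup>L (scalar_meas P (x + scaleC (\<i> ^ k) y)) f) / 4"

text \<open>P is the spectral measure (projection-valued measure on the Borel sets of the unit
  circle) of the unitary U, i.e. U = integral of alpha dP(alpha).\<close>
definition spectral_measure_of :: "('k::{cvec, complete_space} \<Rightarrow> 'k) \<Rightarrow> (complex set \<Rightarrow> 'k \<Rightarrow> 'k) \<Rightarrow> bool" where
  "spectral_measure_of U P \<longleftrightarrow>
     (\<forall>A\<in>circ_sets. clinear (P A) \<and> (\<forall>x. P A (P A x) = P A x)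
                      \<and> (\<forall>x y. cinner (P A x) y = cinner x (P A y)))
   \<and> P circ = id
   \<and> (\<forall>A\<in>circ_sets. \<forall>A'\<in>circ_sets. P (A \<inter> A') = P A \<circ> P A')
   \<and> (\<forall>A :: nat \<Rightarrow> complex set. range A \<subseteq> circ_sets \<and> disjoint_family A
         \<longrightarrow> (\<forall>x. (\<lambda>m. P (A m) x) sums P (\<Union>m. A m) x))
   \<and> (\<forall>x. cinner x (U x) = integral\<^sup>L (scalar_meas P x) (\<lambda>\<alpha>. \<alpha>))"

definition bC :: "complex \<Rightarrow> complex" where "bC z = (z - \<i>) / (z + \<i>)"

text \<open>G_U(z) = \<integral> (\<alpha> + b z)/(\<alpha> - b z) J^* P_U(d\<alpha>) J, as an n x n matrix
  (entries w.r.t. the standard basis of C^n; J is composed with the embedding H \<subseteq> K).\<close>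
definition G_U :: "(complex set \<Rightarrow> 'k::cvec \<Rightarrow> 'k) \<Rightarrow> (complex^'n \<Rightarrow> 'k) \<Rightarrow> complex \<Rightarrow> complex^'n^'n" where
  "G_U P JK z = (\<chi> j k. spec_integral P (\<lambda>\<alpha>. (\<alpha> + bC z) / (\<alpha> - bC z))
                         (JK (axis j 1)) (JK (axis k 1)))"

definition Phi :: "(complex set \<Rightarrow> 'k::cvec \<Rightarrow> 'k) \<Rightarrow> (complex^'n \<Rightarrow> 'k) \<Rightarrow> complex \<Rightarrow> complex^'n^'n" where
  "Phi P JK z = (G_U P JK z - mat 1) ** matrix_inv (G_U P JK z + mat 1)"

definition Omega :: "('k::cvec \<Rightarrow> 'k) \<Rightarrow> (complex^'n \<Rightarrow> 'k) \<Rightarrow> complex \<Rightarrow> complex^'n \<Rightarrow> 'k" where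
  "Omega U JK z v = scaleC (2 * \<i>)
     (inv (\<lambda>x. scaleC (\<i> - cnj z) x + scaleC (\<i> + cnj z) (U x)) (JK v))"

definition Kern :: "('k::cvec \<Rightarrow> 'k) \<Rightarrow> (complex^'n \<Rightarrow> 'k) \<Rightarrow> complex \<Rightarrow> complex \<Rightarrow> complex^'n^'n" where
  "Kern U JK w z = (\<chi> j k. cinner (Omega U JK z (axis j 1)) (Omega U JK w (axis k 1)))"

end

theory Submission
  imports Defs
begin

(* Write x_k = J e_k (viewed in K), b = b(z) with |b| < 1, and let y_k solve
   (U - b) y_k = x_k.  Each value Omega(w) e_k is obtained from the "pencil"
   (i - conj w) + (i + conj w) U, which is invertible on K whenever Im w <> 0; at the four
   points w = i, -i, conj z, z it is expressed through x_k, y_k and U.  Unitarity of U then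
   shows that all four kernels are multiples s*A or s*C (s = 2i/(i+z)) of the two Gram
   matrices  A = (<x_j, y_k>)  and  C = (<x_j, U y_k>) = 1 + b A.
   On the spectral side, U commutes with its spectral projections, so the scalar spectral
   measure of (U - b) y is |alpha - b|^2 times that of y; this evaluates the Cayley integral
   of (alpha + b)/(alpha - b) and gives G_U(z) + 1 = 2C and G_U(z) - 1 = 2b A.
   Since A and C commute, b (sC)^-1 (sA) = (2bA)(2C)^-1 = Phi[U;B](z), which is the theorem.  Only the unitarity of U, its spectral measure and the
   isometry of J enter the computation. *)

section \<open>Algebra of complex inner product spaces\<close>

lemma scaleC_zero_left [simp]: "scaleC 0 (x::'a::cvec) = 0"
  using scaleC_of_real[of 0 x] by simp

lemma scaleC_zero_right [simp]: "scaleC c (0::'a::cvec) = 0"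
proof -
  have "scaleC c (0::'a) = scaleC c 0 + scaleC c 0" using scaleC_add_right[of c 0 0] by simp
  then show ?thesis by simp
qed

lemma scaleC_minus_left: "scaleC (- c) (x::'a::cvec) = - scaleC c x"
proof -
  have "scaleC (c + - c) x = scaleC c x + scaleC (-c) x" by (rule scaleC_add_left)
  then show ?thesis by (simp add: eq_neg_iff_add_eq_0 add.commute)
qed

lemma scaleC_minus_right: "scaleC c (- x::'a::cvec) = - scaleC c x"
proof -
  have "scaleC c (x + - x) = scaleC c x + scaleC c (-x)" by (rule scaleC_add_right)
  then show ?thesis by (simp add: eq_neg_iff_add_eq_0 add.commute)
qed

lemma scaleC_diff_right: "scaleC c (x - y::'a::cvec) = scaleC c x - scaleC c y"
  using scaleC_add_right[of c x "-y"] by (simp add: scaleC_minus_right)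

lemma scaleC_cancel:
  assumes "c \<noteq> 0" and "scaleC c x = scaleC c (y::'a::cvec)"
  shows "x = y"
  using arg_cong[OF assms(2), of "scaleC (1 / c)"] assms(1) by (simp add: scaleC_scaleC scaleC_one)

lemma cinner_add_left: "cinner (x + y) (z::'a::cvec) = cinner x z + cinner y z"
  by (metis cinner_commute cinner_add_right complex_cnj_add)

lemma cinner_scaleC_left: "cinner (scaleC c x) (y::'a::cvec) = cnj c * cinner x y"
  by (metis cinner_commute cinner_scaleC_right complex_cnj_mult complex_cnj_cnj)

lemma cinner_zero_right [simp]: "cinner x (0::'a::cvec) = 0"
  using cinner_scaleC_right[of x 0 0] by simp

lemma cinner_zero_left [simp]: "cinner (0::'a::cvec) x = 0"
  using cinner_scaleC_left[of 0 0 x] by simp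

lemma cinner_minus_right: "cinner x (- y::'a::cvec) = - cinner x y"
  using cinner_scaleC_right[of x "-1" y] by (simp add: scaleC_minus_left scaleC_one)

lemma cinner_minus_left: "cinner (- x::'a::cvec) y = - cinner x y"
  using cinner_scaleC_left[of "-1" x y] by (simp add: scaleC_minus_left scaleC_one)

lemma cinner_diff_right: "cinner x (y - z::'a::cvec) = cinner x y - cinner x z"
  using cinner_add_right[of x y "-z"] by (simp add: cinner_minus_right)

lemma cinner_diff_left: "cinner (x - y) (z::'a::cvec) = cinner x z - cinner y z"
  using cinner_add_left[of x "-y" z] by (simp add: cinner_minus_left)

lemmas cinner_simps = cinner_add_left cinner_add_right cinner_diff_left cinner_diff_right
  cinner_scaleC_left cinner_scaleC_right cinner_minus_left cinner_minus_right

lemma cinner_self_eq_zero: "cinner x x = 0 \<longleftrightarrow> (x::'a::cvec) = 0"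
  using cinner_self[of x] by simp

lemma norm_sq_cinner: "complex_of_real ((norm (x::'a::cvec))^2) = cinner x x"
  by (simp add: cinner_self)

lemma norm_scaleC: "norm (scaleC c (x::'a::cvec)) = cmod c * norm x"
proof -
  have "complex_of_real ((norm (scaleC c x))^2) = cnj c * c * complex_of_real ((norm x)^2)"
    unfolding norm_sq_cinner by (simp add: cinner_simps mult.assoc)
  also have "cnj c * c = complex_of_real ((cmod c)^2)"
    using complex_norm_square[of c] by (simp add: mult.commute)
  finally have "(norm (scaleC c x))^2 = (cmod c * norm x)^2"
    by (simp only: of_real_mult[symmetric] of_real_eq_iff power_mult_distrib)
  then show ?thesis by (simp add: power2_eq_iff_nonneg)
qed

lemma norm_add_sq:
  "(norm (x + y::'a::cvec))^2 = (norm x)^2 + (norm y)^2 + 2 * Re (cinner x y)"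
proof -
  have "complex_of_real ((norm (x + y))^2)
      = cinner x x + cinner y y + (cinner x y + cnj (cinner x y))"
    unfolding norm_sq_cinner by (simp add: cinner_simps cinner_commute[of y x])
  also have "cinner x y + cnj (cinner x y) = complex_of_real (2 * Re (cinner x y))"
    by (simp add: complex_add_cnj)
  finally show ?thesis unfolding norm_sq_cinner[symmetric] of_real_add[symmetric] of_real_eq_iff .
qed

section \<open>Isometries and unitary operators\<close>

lemma clinearD:
  assumes "clinear f"
  shows "f (x + y) = f x + f y" "f (scaleC c x) = scaleC c (f x)" "f (x - y) = f x - f y"
    "f 0 = 0" "f (- x) = - f x"
proof -
  have add: "\<And>x y. f (x + y) = f x + f y" and scale: "\<And>c x. f (scaleC c x) = scaleC c (f x)"
    using assms by (auto simp: clinear_def)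
  have minus: "\<And>x. f (- x) = - f x"
    using scale[of "-1"] by (simp add: scaleC_minus_left scaleC_one)
  show "f (x + y) = f x + f y" "f (scaleC c x) = scaleC c (f x)" "f (- x) = - f x"
    by (rule add scale minus)+
  show "f 0 = 0" using scale[of 0 0] by simp
  show "f (x - y) = f x - f y" using add[of x "-y"] minus[of y] by simp
qed

text \<open>A map that is additive, homogeneous along the imaginary unit and norm preserving
  preserves inner products (polarization).\<close>
lemma isometry_cinner:
  assumes add: "\<And>a c. f (a + c) = f a + f c" and rot: "\<And>a. f (scaleC (- \<i>) a) = scaleC (- \<i>) (f a)"
    and nm: "\<And>a. norm (f a) = norm a"
  shows "cinner (f x) (f y) = cinner x (y::'a::cvec)"
proof -
  have re: "Re (cinner (f a) (f c)) = Re (cinner a c)" for a c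
  proof -
    have "norm (f a + f c) = norm (a + c)" using add[of a c] nm[of "a + c"] by simp
    then show ?thesis using norm_add_sq[of "f a" "f c"] norm_add_sq[of a c] nm by simp
  qed
  have "Re (cinner (f x) (scaleC (- \<i>) (f y))) = Re (cinner x (scaleC (- \<i>) y))"
    using re[of x "scaleC (- \<i>) y"] by (simp add: rot)
  with re[of x y] show ?thesis by (simp add: cinner_scaleC_right complex_eq_iff)
qed

lemma unitary_facts:
  assumes "unitary_op U"
  shows "clinear U" "\<And>x. norm (U x) = norm x" "\<And>x y. cinner (U x) (U y) = cinner x y"
    "\<And>y. U (inv U y) = y"
proof -
  show lin: "clinear U" and nm: "\<And>x. norm (U x) = norm x"
    using assms unfolding unitary_op_def by auto
  show "\<And>x y. cinner (U x) (U y) = cinner x y"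
    by (rule isometry_cinner[OF clinearD(1)[OF lin] clinearD(2)[OF lin] nm])
  show "\<And>y. U (inv U y) = y"
    using assms unfolding unitary_op_def by (simp add: bij_is_surj surj_f_inv_f)
qed

text \<open>The pencil a + b U of a unitary U is onto whenever |a| \<noteq> |b|: the equation
  a x + b U x = y is a contraction fixed-point problem, solved by Banach's theorem
  (for x if |b| < |a|, for U x if |a| < |b|).\<close>
lemma unitary_pencil_surj:
  fixes U :: "'a::{cvec,complete_space} \<Rightarrow> 'a"
  assumes U: "unitary_op U" and ab: "cmod a \<noteq> cmod b"
  shows "surj (\<lambda>x. scaleC a x + scaleC b (U x))"
proof -
  note Uf = unitary_facts[OF U]
  have "\<exists>x. scaleC a x + scaleC b (U x) = y" for y
  proof (cases "cmod b < cmod a")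
    case True
    then have a0: "a \<noteq> 0" by auto
    define f where "f x = scaleC (1/a) (y - scaleC b (U x))" for x
    have "dist (f x) (f x') \<le> (cmod b / cmod a) * dist x x'" for x x'
    proof -
      have "f x - f x' = scaleC (1/a) (scaleC b (U x' - U x))"
        by (simp add: f_def scaleC_diff_right)
      also have "U x' - U x = U (x' - x)" using clinearD(3)[OF Uf(1)] by simp
      finally have "norm (f x - f x') = (cmod b / cmod a) * norm (x' - x)"
        by (simp add: norm_scaleC Uf(2) norm_divide)
      then show ?thesis by (simp add: dist_norm norm_minus_commute)
    qed
    moreover have "0 \<le> cmod b / cmod a" "cmod b / cmod a < 1" using True a0 by auto
    ultimately have "\<exists>!x. f x = x"
      by (intro banach_fix_type[where c="cmod b / cmod a" and f=f]) auto
    then obtain x where "f x = x" by (auto simp: Ex1_def)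
    then have "scaleC a x = scaleC a (f x)" by simp
    also have "\<dots> = y - scaleC b (U x)" using a0 by (simp add: f_def scaleC_scaleC scaleC_one)
    finally show ?thesis by (intro exI[of _ x]) (simp add: eq_diff_eq add.commute)
  next
    case False
    then have lt: "cmod a < cmod b" using ab by auto
    then have b0: "b \<noteq> 0" by auto
    define f where "f x = inv U (scaleC (1/b) (y - scaleC a x))" for x
    have "dist (f x) (f x') \<le> (cmod a / cmod b) * dist x x'" for x x'
    proof -
      have "dist (f x) (f x') = norm (U (f x - f x'))" by (simp add: dist_norm Uf(2))
      also have "U (f x - f x') = U (f x) - U (f x')" by (rule clinearD(3)[OF Uf(1)])
      also have "U (f x) - U (f x') = scaleC (1/b) (scaleC a (x' - x))"
        by (simp add: f_def Uf(4) scaleC_diff_right)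
      finally show ?thesis by (simp add: norm_scaleC norm_divide dist_norm norm_minus_commute)
    qed
    moreover have "0 \<le> cmod a / cmod b" "cmod a / cmod b < 1" using lt b0 by auto
    ultimately have "\<exists>!x. f x = x"
      by (intro banach_fix_type[where c="cmod a / cmod b" and f=f]) auto
    then obtain x where "f x = x" by (auto simp: Ex1_def)
    then have "scaleC b (U x) = scaleC b (U (f x))" by simp
    also have "\<dots> = y - scaleC a x" using b0 by (simp add: f_def Uf(4) scaleC_scaleC scaleC_one)
    finally show ?thesis by (intro exI[of _ x]) (simp add: eq_diff_eq add.commute)
  qed
  then show ?thesis by (metis surj_def)
qed

lemma isometry_axis_orthonormal:
  fixes f :: "complex^'n \<Rightarrow> 'k::cvec"
  assumes add: "\<And>a c. f (a + c) = f a + f c" and sc: "\<And>s a. f (s *s a) = scaleC s (f a)"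
    and nm: "\<And>a. norm (f a) = norm a"
  shows "cinner (f (axis j 1)) (f (axis k 1)) = (if j = k then 1 else 0)"
proof -
  have re: "Re (cinner (f a) (f c)) = inner a c" for a c
  proof -
    have "norm (f a + f c) = norm (a + c)" using add[of a c] nm[of "a + c"] by simp
    then show ?thesis using norm_add_sq[of "f a" "f c"] dot_norm[of a c] nm by simp
  qed
  have ax: "(- \<i>) *s axis k (1::complex) = axis k (- \<i>)"
    by (simp add: vec_eq_iff axis_def vector_scalar_mult_def)
  have "Im (cinner (f (axis j 1)) (f (axis k 1)))
      = Re (cinner (f (axis j 1)) (f ((- \<i>) *s axis k 1)))"
    unfolding sc by (simp add: cinner_scaleC_right)
  also have "\<dots> = 0" unfolding re ax by (simp add: inner_axis_axis inner_complex_def)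
  finally show ?thesis using re[of "axis j 1" "axis k 1"]
    by (simp add: complex_eq_iff inner_axis_axis)
qed

section \<open>Spectral measures of unitary operators\<close>

abbreviation circ_borel :: "complex measure" where "circ_borel \<equiv> restrict_space borel circ"

lemma space_circ_borel: "space circ_borel = circ"
  by (simp add: space_restrict_space)

lemma circ_sets_sigma_algebra: "sigma_algebra circ circ_sets"
  using sets.sigma_algebra_axioms[of circ_borel] by (simp add: space_circ_borel circ_sets_def)

lemma circ_sets_subset: "A \<in> circ_sets \<Longrightarrow> A \<subseteq> circ"
  using sets.sets_into_space[of A circ_borel] by (simp add: circ_sets_def space_circ_borel)

lemma circ_sets_top: "circ \<in> circ_sets"
  using sets.top[of circ_borel] by (simp add: circ_sets_def space_circ_borel)

lemma circ_sets_empty: "{} \<in> circ_sets"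
  by (simp add: circ_sets_def)

lemma circ_sets_Int: "A \<in> circ_sets \<Longrightarrow> B \<in> circ_sets \<Longrightarrow> A \<inter> B \<in> circ_sets"
  by (simp add: circ_sets_def sets.Int)

lemma circ_sets_Un: "A \<in> circ_sets \<Longrightarrow> B \<in> circ_sets \<Longrightarrow> A \<union> B \<in> circ_sets"
  by (simp add: circ_sets_def sets.Un)

lemma circ_sets_compl: "A \<in> circ_sets \<Longrightarrow> circ - A \<in> circ_sets"
  by (simp add: circ_sets_def sets.Diff circ_sets_top[unfolded circ_sets_def])

lemma circ_sets_borel: "A \<in> circ_sets \<Longrightarrow> A \<in> sets borel"
proof -
  have "circ \<in> sets borel" by (simp add: borel_closed)
  then show "A \<in> circ_sets \<Longrightarrow> A \<in> sets borel"
    unfolding circ_sets_def by (subst (asm) sets_restrict_space_iff) auto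
qed

locale unitary_spectral =
  fixes U :: "'k::{cvec,complete_space} \<Rightarrow> 'k" and P :: "complex set \<Rightarrow> 'k \<Rightarrow> 'k"
  assumes unitary: "unitary_op U" and spectral: "spectral_measure_of U P"
begin

lemma U_add: "U (x + y) = U x + U y"
  and U_scaleC: "U (scaleC c x) = scaleC c (U x)"
  using clinearD[OF unitary_facts(1)[OF unitary]] by auto

lemma U_cinner: "cinner (U x) (U y) = cinner x y"
  using unitary_facts(3)[OF unitary] by auto

lemma P_clinear: "A \<in> circ_sets \<Longrightarrow> clinear (P A)"
  using spectral by (simp add: spectral_measure_of_def)

lemma P_add: "A \<in> circ_sets \<Longrightarrow> P A (x + y) = P A x + P A y"
  and P_scaleC: "A \<in> circ_sets \<Longrightarrow> P A (scaleC c x) = scaleC c (P A x)"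
  and P_diff: "A \<in> circ_sets \<Longrightarrow> P A (x - y) = P A x - P A y"
  using clinearD[OF P_clinear] by auto

lemma P_idem: "A \<in> circ_sets \<Longrightarrow> P A (P A x) = P A x"
  using spectral by (simp add: spectral_measure_of_def)

lemma P_selfadjoint: "A \<in> circ_sets \<Longrightarrow> cinner (P A x) y = cinner x (P A y)"
  using spectral by (simp add: spectral_measure_of_def)

lemma P_circ: "P circ x = x"
  using spectral by (simp add: spectral_measure_of_def)

lemma P_Int: "A \<in> circ_sets \<Longrightarrow> B \<in> circ_sets \<Longrightarrow> P (A \<inter> B) x = P A (P B x)"
  using spectral by (simp add: spectral_measure_of_def)

lemma P_sums: "range F \<subseteq> circ_sets \<Longrightarrow> disjoint_family F \<Longrightarrow> (\<lambda>m. P (F m) x) sums P (\<Union>m. F m) x"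
  using spectral by (simp add: spectral_measure_of_def)

lemma first_moment: "integral\<^sup>L (scalar_meas P x) (\<lambda>\<alpha>. \<alpha>) = cinner x (U x)"
  using spectral by (simp add: spectral_measure_of_def)

lemma P_empty: "P {} x = 0"
proof -
  have "(\<lambda>m. P ((\<lambda>_::nat. {}) m) x) sums P (\<Union>m. (\<lambda>_::nat. {}) m) x"
    by (rule P_sums) (auto simp: circ_sets_empty disjoint_family_on_def)
  then have "(\<lambda>m::nat. P {} x) \<longlonglongrightarrow> 0" using summable_LIMSEQ_zero sums_summable by force
  then show ?thesis using LIMSEQ_const_iff by blast
qed

lemma P_Un:
  assumes "A \<in> circ_sets" "B \<in> circ_sets" "A \<inter> B = {}"
  shows "P (A \<union> B) x = P A x + P B x"
proof -
  define F where "F n = (if n = 0 then A else if n = 1 then B else {})" for n :: nat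
  have "range F \<subseteq> circ_sets" using assms by (auto simp: F_def circ_sets_empty)
  moreover have "disjoint_family F" using assms(3) unfolding disjoint_family_on_def F_def by auto
  moreover have "(\<Union>m. F m) = A \<union> B" by (auto simp: F_def split: if_splits)
  ultimately have "(\<lambda>m. P (F m) x) sums P (A \<union> B) x" using P_sums by metis
  moreover have "(\<lambda>m. P (F m) x) sums (\<Sum>n\<in>{0,1}. P (F n) x)"
    by (rule sums_finite) (auto simp: F_def P_empty)
  ultimately show ?thesis by (simp add: sums_unique2 F_def)
qed

lemma P_compl: "A \<in> circ_sets \<Longrightarrow> P (circ - A) x = x - P A x"
proof -
  assume A: "A \<in> circ_sets"
  have "A \<union> (circ - A) = circ" using circ_sets_subset[OF A] by auto
  then have "P circ x = P A x + P (circ - A) x"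
    using P_Un[OF A circ_sets_compl[OF A], of x] by auto
  then show ?thesis using P_circ[of x] by (simp add: eq_diff_eq add.commute)
qed

lemma P_cinner_P:
  "A \<in> circ_sets \<Longrightarrow> B \<in> circ_sets \<Longrightarrow> cinner (P A x) (P B y) = cinner x (P (A \<inter> B) y)"
  by (simp add: P_selfadjoint P_Int)

text \<open>Partial sums over disjoint sets: the projections add up, and so do the squared norms
  (Pythagoras, by orthogonality of the ranges).\<close>
lemma P_partial_sums:
  fixes F :: "nat \<Rightarrow> complex set"
  assumes r: "range F \<subseteq> circ_sets" and d: "disjoint_family F"
  shows "(\<Sum>i<n. P (F i) x) = P (\<Union>i<n. F i) x \<and> (\<Union>i<n. F i) \<in> circ_sets
      \<and> (\<Sum>i<n. (norm (P (F i) x))^2) = (norm (P (\<Union>i<n. F i) x))^2"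
proof (induction n)
  case 0
  then show ?case by (simp add: P_empty circ_sets_empty)
next
  case (Suc n)
  let ?S = "\<Union>i<n. F i"
  have Fn: "F n \<in> circ_sets" using r by auto
  have dj: "?S \<inter> F n = {}"
    using d unfolding disjoint_family_on_def by (blast dest: less_imp_neq)
  have S: "?S \<in> circ_sets" using Suc.IH by blast
  have pu: "P (?S \<union> F n) x = P ?S x + P (F n) x" by (rule P_Un[OF S Fn dj])
  have "cinner (P ?S x) (P (F n) x) = 0" using P_cinner_P[OF S Fn] dj by (simp add: P_empty)
  then have "(norm (P (?S \<union> F n) x))^2 = (norm (P ?S x))^2 + (norm (P (F n) x))^2"
    unfolding pu norm_add_sq by simp
  moreover have "(\<Union>i<Suc n. F i) = ?S \<union> F n" by (auto simp: lessThan_Suc)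
  ultimately show ?case using Suc.IH pu S Fn by (simp add: circ_sets_Un)
qed

lemma P_norm_sums:
  fixes F :: "nat \<Rightarrow> complex set"
  assumes r: "range F \<subseteq> circ_sets" and d: "disjoint_family F"
  shows "(\<lambda>i. (norm (P (F i) x))^2) sums (norm (P (\<Union>i. F i) x))^2"
proof -
  have "(\<lambda>n. \<Sum>i<n. P (F i) x) \<longlonglongrightarrow> P (\<Union>i. F i) x"
    using P_sums[OF r d, of x] unfolding sums_def .
  then have "(\<lambda>n. (norm (\<Sum>i<n. P (F i) x))^2) \<longlonglongrightarrow> (norm (P (\<Union>i. F i) x))^2"
    by (intro tendsto_power tendsto_norm)
  moreover have "(norm (\<Sum>i<n. P (F i) x))^2 = (\<Sum>i<n. (norm (P (F i) x))^2)" for n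
    using P_partial_sums[OF r d, where n=n and x=x] by auto
  ultimately show ?thesis unfolding sums_def by simp
qed

text \<open>A \<mapsto> |P(A) x|^2 is countably additive, so scalar_meas P x is a finite measure
  on the Borel sets of the circle with total mass |x|^2.\<close>
lemma emeasure_scalar_meas:
  "A \<in> circ_sets \<Longrightarrow> emeasure (scalar_meas P x) A = ennreal ((norm (P A x))^2)"
  unfolding scalar_meas_def
proof (rule emeasure_measure_of_sigma[OF circ_sets_sigma_algebra])
  show "positive circ_sets (\<lambda>A. ennreal ((norm (P A x))\<^sup>2))"
    by (simp add: positive_def P_empty)
  show "countably_additive circ_sets (\<lambda>A. ennreal ((norm (P A x))\<^sup>2))"
    unfolding countably_additive_def
  proof (intro allI impI)
    fix F :: "nat \<Rightarrow> complex set"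
    assume r: "range F \<subseteq> circ_sets" and d: "disjoint_family F"
    have s: "(\<lambda>i. (norm (P (F i) x))^2) sums (norm (P (\<Union>i. F i) x))^2"
      by (rule P_norm_sums[OF r d])
    have "(\<Sum>i. ennreal ((norm (P (F i) x))^2)) = ennreal (\<Sum>i. (norm (P (F i) x))^2)"
      by (rule suminf_ennreal2[OF _ sums_summable[OF s]]) simp
    also have "(\<Sum>i. (norm (P (F i) x))^2) = (norm (P (\<Union>i. F i) x))^2"
      using s by (rule sums_unique[symmetric])
    finally show "(\<Sum>i. ennreal ((norm (P (F i) x))\<^sup>2)) = ennreal ((norm (P (\<Union> (range F)) x))\<^sup>2)" .
  qed
qed

lemma sets_scalar_meas: "sets (scalar_meas P x) = circ_sets"
proof -
  have "circ_sets \<subseteq> Pow circ" using circ_sets_subset by blast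
  then show ?thesis unfolding scalar_meas_def
    by (simp add: sets_measure_of sigma_algebra.sigma_sets_eq[OF circ_sets_sigma_algebra])
qed

lemma space_scalar_meas: "space (scalar_meas P x) = circ"
  unfolding scalar_meas_def using circ_sets_subset by (subst space_measure_of) auto

lemma finite_scalar_meas: "finite_measure (scalar_meas P x)"
  by (rule finite_measureI) (simp add: space_scalar_meas emeasure_scalar_meas circ_sets_top)

lemma total_scalar_meas: "measure (scalar_meas P x) circ = (norm x)^2"
  by (simp add: measure_def emeasure_scalar_meas circ_sets_top P_circ)

lemma borel_measurable_scalar_meas:
  "f \<in> borel_measurable borel \<Longrightarrow> f \<in> borel_measurable (scalar_meas P x)"
proof -
  assume "f \<in> borel_measurable borel"
  then have "f \<in> borel_measurable circ_borel" by (rule measurable_restrict_space1)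
  moreover have "sets (scalar_meas P x) = sets circ_borel" by (simp add: sets_scalar_meas circ_sets_def)
  ultimately show ?thesis using measurable_cong_sets[of "scalar_meas P x" circ_borel borel borel] by simp
qed

lemma integrable_scalar_meas:
  fixes f :: "complex \<Rightarrow> 'b::{banach,second_countable_topology}"
  assumes "f \<in> borel_measurable borel" "\<And>\<alpha>. \<alpha> \<in> circ \<Longrightarrow> norm (f \<alpha>) \<le> B"
  shows "integrable (scalar_meas P x) f"
proof -
  have "AE \<alpha> in scalar_meas P x. norm (f \<alpha>) \<le> B"
    by (rule AE_I2) (simp add: space_scalar_meas assms(2))
  then show ?thesis
    using finite_measure.integrable_const_bound[OF finite_scalar_meas]
      borel_measurable_scalar_meas[OF assms(1)] by blast
qed

lemma scalar_meas_P:
  assumes A: "A \<in> circ_sets"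
  shows "scalar_meas P (P A y) = density (scalar_meas P y) (\<lambda>\<alpha>. ennreal (indicator A \<alpha>))"
proof (rule measure_eqI)
  show "sets (scalar_meas P (P A y)) = sets (density (scalar_meas P y) (\<lambda>\<alpha>. ennreal (indicator A \<alpha>)))"
    by (simp add: sets_scalar_meas)
  fix B assume "B \<in> sets (scalar_meas P (P A y))"
  then have B: "B \<in> circ_sets" by (simp add: sets_scalar_meas)
  have Am[measurable]: "A \<in> sets (scalar_meas P y)" using A by (simp add: sets_scalar_meas)
  have Bm: "B \<in> sets (scalar_meas P y)" using B by (simp add: sets_scalar_meas)
  have "emeasure (density (scalar_meas P y) (\<lambda>\<alpha>. ennreal (indicator A \<alpha>))) B
      = (\<integral>\<^sup>+ \<alpha>. ennreal (indicator A \<alpha>) * indicator B \<alpha> \<partial>scalar_meas P y)"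
    by (rule emeasure_density[OF _ Bm]) measurable
  also have "\<dots> = (\<integral>\<^sup>+ \<alpha>. indicator (B \<inter> A) \<alpha> \<partial>scalar_meas P y)"
    by (intro nn_integral_cong) (auto simp: indicator_def)
  also have "\<dots> = ennreal ((norm (P (B \<inter> A) y))^2)"
    using circ_sets_Int[OF B A] by (simp add: sets_scalar_meas emeasure_scalar_meas)
  finally show "emeasure (scalar_meas P (P A y)) B
      = emeasure (density (scalar_meas P y) (\<lambda>\<alpha>. ennreal (indicator A \<alpha>))) B"
    using emeasure_scalar_meas[OF B] P_Int[OF B A] by simp
qed

lemma integral_scalar_meas_P:
  fixes g :: "complex \<Rightarrow> 'b::{banach,second_countable_topology}"
  assumes A: "A \<in> circ_sets" and g: "g \<in> borel_measurable borel"
  shows "integral\<^sup>L (scalar_meas P (P A y)) g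
       = integral\<^sup>L (scalar_meas P y) (\<lambda>\<alpha>. indicator A \<alpha> *\<^sub>R g \<alpha>)"
proof -
  have [measurable]: "A \<in> sets (scalar_meas P y)" using A by (simp add: sets_scalar_meas)
  show ?thesis unfolding scalar_meas_P[OF A]
    by (rule integral_density) (auto simp: borel_measurable_scalar_meas[OF g])
qed

lemma integral_degree_one:
  "integral\<^sup>L (scalar_meas P x) (\<lambda>\<alpha>. c0 + c1 * \<alpha> + c2 * cnj \<alpha>)
     = c0 * complex_of_real ((norm x)^2) + c1 * cinner x (U x) + c2 * cnj (cinner x (U x))"
proof -
  let ?M = "scalar_meas P x"
  have "integrable ?M (\<lambda>\<alpha>. c1 * \<alpha>)"
    by (rule integrable_scalar_meas[where B="cmod c1"]) (auto simp: norm_mult)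
  moreover have "integrable ?M (\<lambda>\<alpha>. c2 * cnj \<alpha>)"
    by (rule integrable_scalar_meas[where B="cmod c2"])
      (auto simp: norm_mult intro!: borel_measurable_continuous_onI continuous_intros)
  moreover have "integrable ?M (\<lambda>\<alpha>. c0)"
    by (rule integrable_scalar_meas[where B="cmod c0"]) auto
  ultimately have "integral\<^sup>L ?M (\<lambda>\<alpha>. c0 + c1 * \<alpha> + c2 * cnj \<alpha>)
      = integral\<^sup>L ?M (\<lambda>\<alpha>. c0) + c1 * integral\<^sup>L ?M (\<lambda>\<alpha>. \<alpha>) + c2 * cnj (integral\<^sup>L ?M (\<lambda>\<alpha>. \<alpha>))"
    by simp
  then show ?thesis
    by (simp add: first_moment space_scalar_meas total_scalar_meas scaleR_conv_of_real mult.commute)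
qed

text \<open>Splitting the first moment of x over a Borel set A and its complement A' shows that
  the two cross terms between P(A) x and P(A') x cancel.\<close>
lemma first_moment_cross_terms:
  assumes A: "A \<in> circ_sets"
  shows "cinner (P A x) (U (P (circ - A) x)) + cinner (P (circ - A) x) (U (P A x)) = 0"
proof -
  let ?A' = "circ - A" and ?M = "scalar_meas P x"
  have A': "?A' \<in> circ_sets" by (rule circ_sets_compl[OF A])
  have [measurable]: "A \<in> sets borel" "?A' \<in> sets borel" using circ_sets_borel A A' by auto
  have "integrable ?M (\<lambda>\<alpha>. indicator S \<alpha> *\<^sub>R \<alpha>)" if "S \<in> sets borel" for S
    using that by (intro integrable_scalar_meas[where B=1]) (auto simp: indicator_def)
  then have "integral\<^sup>L ?M (\<lambda>\<alpha>. indicator A \<alpha> *\<^sub>R \<alpha>) + integral\<^sup>L ?M (\<lambda>\<alpha>. indicator ?A' \<alpha> *\<^sub>R \<alpha>)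
     = integral\<^sup>L ?M (\<lambda>\<alpha>. indicator A \<alpha> *\<^sub>R \<alpha> + indicator ?A' \<alpha> *\<^sub>R \<alpha>)"
    by simp
  also have "\<dots> = integral\<^sup>L ?M (\<lambda>\<alpha>. \<alpha>)"
    by (rule Bochner_Integration.integral_cong[OF refl]) (auto simp: space_scalar_meas indicator_def)
  finally have "cinner (P A x) (U (P A x)) + cinner (P ?A' x) (U (P ?A' x)) = cinner x (U x)"
    using integral_scalar_meas_P[OF A, of "\<lambda>\<alpha>. \<alpha>" x] integral_scalar_meas_P[OF A', of "\<lambda>\<alpha>. \<alpha>" x]
    by (simp add: first_moment)
  moreover have "x = P A x + P ?A' x" using P_compl[OF A] by simp
  ultimately have "cinner (P A x) (U (P A x)) + cinner (P ?A' x) (U (P ?A' x))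
     = cinner (P A x + P ?A' x) (U (P A x + P ?A' x))" by simp
  then show ?thesis by (simp add: U_add cinner_simps algebra_simps)
qed

text \<open>By polarization, U maps the range of P(A') orthogonally to the range of P(A).\<close>
lemma U_ranges_orthogonal:
  assumes A: "A \<in> circ_sets"
  shows "cinner (P A u) (U (P (circ - A) v)) = 0"
proof -
  let ?A' = "circ - A"
  have A': "?A' \<in> circ_sets" by (rule circ_sets_compl[OF A])
  have dj: "A \<inter> ?A' = {}" "?A' \<inter> A = {}" by auto
  define p where "p = P A u"
  define q where "q = P ?A' v"
  have cross: "cnj c * cinner q (U p) + c * cinner p (U q) = 0" for c
  proof -
    define x where "x = p + scaleC c q"
    have "P A x = p" unfolding x_def p_def q_def
      using P_Int[OF A A', of v, symmetric] P_idem[OF A] dj by (simp add: P_add P_scaleC A P_empty)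
    moreover have "P ?A' x = scaleC c q" unfolding x_def p_def q_def
      using P_Int[OF A' A, of u, symmetric] P_idem[OF A'] dj by (simp add: P_add P_scaleC A' P_empty)
    ultimately show ?thesis using first_moment_cross_terms[OF A, of x]
      by (simp add: U_add U_scaleC cinner_simps algebra_simps)
  qed
  have "cinner q (U p) + cinner p (U q) = 0" using cross[of 1] by simp
  moreover have "- \<i> * cinner q (U p) + \<i> * cinner p (U q) = 0" using cross[of \<i>] by simp
  ultimately have "cinner p (U q) = 0" by (simp add: algebra_simps)
  then show ?thesis by (simp add: p_def q_def)
qed

lemma P_eq_0_if_orthogonal:
  assumes A: "A \<in> circ_sets" and orth: "\<And>u. cinner (P A u) w = 0"
  shows "P A w = 0"
proof -
  have "cinner (P A w) (P A w) = cinner (P A w) w"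
    by (simp add: P_cinner_P[OF A A] P_selfadjoint[OF A] P_idem[OF A])
  then show ?thesis using orth by (simp add: cinner_self_eq_zero)
qed

lemma U_commutes_P:
  assumes A: "A \<in> circ_sets"
  shows "U (P A v) = P A (U v)"
proof -
  let ?A' = "circ - A"
  have A': "?A' \<in> circ_sets" by (rule circ_sets_compl[OF A])
  have "circ - ?A' = A" using circ_sets_subset[OF A] by auto
  then have "P ?A' (U (P A v)) = 0"
    using U_ranges_orthogonal[OF A', of _ v] by (intro P_eq_0_if_orthogonal[OF A']) simp
  then have UA: "U (P A v) = P A (U (P A v))" using P_compl[OF A, of "U (P A v)"] by simp
  have UA': "P A (U (P ?A' v)) = 0"
    using U_ranges_orthogonal[OF A, of _ v] by (intro P_eq_0_if_orthogonal[OF A]) simp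
  have "P A (U v) = P A (U (P A v + P ?A' v))" using P_compl[OF A, of v] by simp
  also have "\<dots> = P A (U (P A v))" by (simp add: U_add P_add A UA')
  finally show ?thesis using UA by simp
qed

lemma circ_cnj_mult: "cmod \<alpha> = 1 \<Longrightarrow> \<alpha> * cnj \<alpha> = 1"
  using complex_norm_square[of \<alpha>] by simp

lemma dist_sq_borel: "(\<lambda>\<alpha>::complex. (cmod (\<alpha> - b))^2) \<in> borel_measurable borel"
  by (intro borel_measurable_continuous_onI continuous_intros)

text \<open>On the circle |\<alpha> - b|^2 is a first-degree trigonometric polynomial, whose integral
  is the squared norm of (U - b) w.\<close>
lemma integral_dist_sq:
  "integral\<^sup>L (scalar_meas P w) (\<lambda>\<alpha>. (cmod (\<alpha> - b))^2) = (norm (U w - scaleC b w))^2"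
proof -
  have "complex_of_real (integral\<^sup>L (scalar_meas P w) (\<lambda>\<alpha>. (cmod (\<alpha> - b))^2))
      = integral\<^sup>L (scalar_meas P w) (\<lambda>\<alpha>. complex_of_real ((cmod (\<alpha> - b))^2))"
    by (rule integral_complex_of_real[symmetric])
  also have "\<dots> = integral\<^sup>L (scalar_meas P w) (\<lambda>\<alpha>. (1 + b * cnj b) + (- cnj b) * \<alpha> + (- b) * cnj \<alpha>)"
  proof (rule Bochner_Integration.integral_cong[OF refl])
    fix \<alpha> assume "\<alpha> \<in> space (scalar_meas P w)"
    then have "\<alpha> * cnj \<alpha> = 1" by (simp add: space_scalar_meas circ_cnj_mult)
    then show "complex_of_real ((cmod (\<alpha> - b))^2) = (1 + b * cnj b) + (- cnj b) * \<alpha> + (- b) * cnj \<alpha>"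
      unfolding complex_norm_square by (simp add: algebra_simps)
  qed
  also have "\<dots> = complex_of_real ((norm (U w - scaleC b w))^2)"
    unfolding integral_degree_one norm_sq_cinner
    by (simp add: cinner_simps U_cinner cinner_commute[of "U w" w] algebra_simps)
  finally show ?thesis by (simp only: of_real_eq_iff)
qed

text \<open>The scalar measure of (U - b) y has density |\<alpha> - b|^2 with respect to that of y;
  this uses that U commutes with the spectral projections.\<close>
lemma scalar_meas_shift:
  assumes x: "x = U y - scaleC b y"
  shows "scalar_meas P x = density (scalar_meas P y) (\<lambda>\<alpha>. ennreal ((cmod (\<alpha> - b))^2))"
proof (rule measure_eqI)
  let ?g = "\<lambda>\<alpha>. (cmod (\<alpha> - b))^2"
  show "sets (scalar_meas P x) = sets (density (scalar_meas P y) (\<lambda>\<alpha>. ennreal (?g \<alpha>)))"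
    by (simp add: sets_scalar_meas)
  fix B assume "B \<in> sets (scalar_meas P x)"
  then have B: "B \<in> circ_sets" by (simp add: sets_scalar_meas)
  have [measurable]: "B \<in> sets borel" by (rule circ_sets_borel[OF B])
  have gint: "integrable (scalar_meas P y) (\<lambda>\<alpha>. indicator B \<alpha> * ?g \<alpha>)"
  proof (rule integrable_scalar_meas[where B="(1 + cmod b)^2"])
    show "(\<lambda>\<alpha>. indicator B \<alpha> * ?g \<alpha>) \<in> borel_measurable borel"
      using dist_sq_borel by measurable
    fix \<alpha> :: complex assume "\<alpha> \<in> circ"
    then have "cmod (\<alpha> - b) \<le> 1 + cmod b" using norm_triangle_ineq4[of \<alpha> b] by simp
    then have "?g \<alpha> \<le> (1 + cmod b)^2" by (intro power_mono) auto
    then show "norm (indicator B \<alpha> * ?g \<alpha>) \<le> (1 + cmod b)\<^sup>2" by (auto simp: indicator_def)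
  qed
  have "emeasure (density (scalar_meas P y) (\<lambda>\<alpha>. ennreal (?g \<alpha>))) B
      = (\<integral>\<^sup>+\<alpha>. ennreal (indicator B \<alpha> * ?g \<alpha>) \<partial>scalar_meas P y)"
    using B by (subst emeasure_density)
      (auto simp: sets_scalar_meas borel_measurable_scalar_meas[OF dist_sq_borel]
        intro!: nn_integral_cong simp: indicator_def)
  also have "\<dots> = ennreal (integral\<^sup>L (scalar_meas P (P B y)) ?g)"
    using nn_integral_eq_integral[OF gint] integral_scalar_meas_P[OF B dist_sq_borel, of y] by simp
  also have "\<dots> = ennreal ((norm (P B x))^2)"
    by (simp add: integral_dist_sq x B P_diff P_scaleC U_commutes_P)
  finally show "emeasure (scalar_meas P x) B = emeasure (density (scalar_meas P y) (\<lambda>\<alpha>. ennreal (?g \<alpha>))) B"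
    using emeasure_scalar_meas[OF B, of x] by simp
qed

text \<open>For |b| < 1 the Cayley kernel (\<alpha> + b)/(\<alpha> - b) has no pole on the circle, and
  against the scalar measure of x = (U - b) y it integrates to <x, x + 2b y>.\<close>
lemma cayley_integral:
  assumes b: "cmod b < 1" and x: "x = U y - scaleC b y"
  shows "integral\<^sup>L (scalar_meas P x) (\<lambda>\<alpha>. (\<alpha> + b) / (\<alpha> - b)) = cinner x (x + scaleC (2*b) y)"
proof -
  have "integral\<^sup>L (scalar_meas P x) (\<lambda>\<alpha>. (\<alpha> + b) / (\<alpha> - b))
      = integral\<^sup>L (scalar_meas P y) (\<lambda>\<alpha>. (cmod (\<alpha> - b))^2 *\<^sub>R ((\<alpha> + b) / (\<alpha> - b)))"
    unfolding scalar_meas_shift[OF x]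
    by (rule integral_density) (auto intro!: borel_measurable_scalar_meas dist_sq_borel)
  also have "\<dots> = integral\<^sup>L (scalar_meas P y) (\<lambda>\<alpha>. (1 - b * cnj b) + (- cnj b) * \<alpha> + b * cnj \<alpha>)"
  proof (rule Bochner_Integration.integral_cong[OF refl])
    fix \<alpha> assume "\<alpha> \<in> space (scalar_meas P y)"
    then have a: "cmod \<alpha> = 1" by (simp add: space_scalar_meas)
    then have "\<alpha> - b \<noteq> 0" using b by auto
    then have "(cmod (\<alpha> - b))^2 *\<^sub>R ((\<alpha> + b) / (\<alpha> - b)) = cnj (\<alpha> - b) * (\<alpha> + b)"
      unfolding scaleR_conv_of_real complex_norm_square by (simp add: field_simps)
    also have "\<dots> = \<alpha> * cnj \<alpha> - b * cnj b + (- cnj b) * \<alpha> + b * cnj \<alpha>" by (simp add: algebra_simps)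
    finally show "(cmod (\<alpha> - b))^2 *\<^sub>R ((\<alpha> + b) / (\<alpha> - b)) = (1 - b * cnj b) + (- cnj b) * \<alpha> + b * cnj \<alpha>"
      using circ_cnj_mult[OF a] by simp
  qed
  also have "\<dots> = cinner x (x + scaleC (2*b) y)"
    unfolding integral_degree_one norm_sq_cinner x
    by (simp add: cinner_simps U_cinner cinner_commute[of "U y" y] algebra_simps)
  finally show ?thesis .
qed

lemma spec_integral_cayley:
  assumes b: "cmod b < 1" and xy: "x = U y - scaleC b y" and xy': "x' = U y' - scaleC b y'"
  shows "spec_integral P (\<lambda>\<alpha>. (\<alpha> + b) / (\<alpha> - b)) x x' = cinner x (x' + scaleC (2*b) y')"
proof -
  let ?X = "x + scaleC (2*b) y" and ?X' = "x' + scaleC (2*b) y'"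
  have polar: "integral\<^sup>L (scalar_meas P (x + scaleC c x')) (\<lambda>\<alpha>. (\<alpha> + b) / (\<alpha> - b))
      = cinner x ?X + c * cinner x ?X' + cnj c * cinner x' ?X + cnj c * c * cinner x' ?X'" for c
  proof -
    have shift: "x + scaleC c x' = U (y + scaleC c y') - scaleC b (y + scaleC c y')"
      by (simp add: xy xy' U_add U_scaleC scaleC_add_right scaleC_diff_right scaleC_scaleC mult.commute)
    have "(x + scaleC c x') + scaleC (2*b) (y + scaleC c y') = ?X + scaleC c ?X'"
      by (simp add: scaleC_add_right scaleC_scaleC mult.commute algebra_simps)
    then show ?thesis unfolding cayley_integral[OF b shift]
      by (simp add: cinner_simps algebra_simps)
  qed
  have "\<i> ^ 3 = - \<i>" by (simp add: power3_eq_cube)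
  then show ?thesis unfolding spec_integral_def polar
    by (simp add: eval_nat_numeral algebra_simps)
qed

end

section \<open>The Cayley transform and the vectors \<Omega>(w)\<close>

text \<open>For Im w \<noteq> 0 the pencil (i - conj w) + (i + conj w) U has coefficients of
  different moduli, so it is onto.\<close>
lemma pencil_coeffs_differ:
  assumes "Im w \<noteq> 0"
  shows "cmod (\<i> - cnj w) \<noteq> cmod (\<i> + cnj w)"
proof -
  have "(cmod (\<i> - cnj w))^2 = (Re w)^2 + (1 + Im w)^2"
    and "(cmod (\<i> + cnj w))^2 = (Re w)^2 + (1 - Im w)^2"
    by (simp_all add: cmod_power2)
  moreover have "(1 + Im w)^2 \<noteq> (1 - Im w)^2" using assms by (simp add: power2_eq_square algebra_simps)
  ultimately show ?thesis by auto
qed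

lemma bC_norm_less_one:
  assumes "Im z > 0"
  shows "cmod (bC z) < 1"
proof -
  have "(cmod (z - \<i>))^2 = (Re z)^2 + (Im z - 1)^2" "(cmod (z + \<i>))^2 = (Re z)^2 + (Im z + 1)^2"
    by (simp_all add: cmod_power2)
  moreover have "(Im z - 1)^2 < (Im z + 1)^2" using assms by (simp add: power2_eq_square algebra_simps)
  ultimately have "(cmod (z - \<i>))^2 < (cmod (z + \<i>))^2" by simp
  then have "cmod (z - \<i>) < cmod (z + \<i>)" by (rule power_less_imp_less_base) simp
  then show ?thesis by (simp add: bC_def norm_divide divide_less_eq)
qed

lemma Omega_pencil_eq:
  fixes U :: "'k::{cvec,complete_space} \<Rightarrow> 'k"
  assumes U: "unitary_op U" and w: "Im w \<noteq> 0"
  shows "scaleC (\<i> - cnj w) (Omega U JK w v) + scaleC (\<i> + cnj w) (U (Omega U JK w v))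
       = scaleC (2 * \<i>) (JK v)"
proof -
  define L where "L = (\<lambda>x. scaleC (\<i> - cnj w) x + scaleC (\<i> + cnj w) (U x))"
  have lin: "L (scaleC c x) = scaleC c (L x)" for c x
    using clinearD(2)[OF unitary_facts(1)[OF U]]
    by (simp add: L_def scaleC_add_right scaleC_scaleC mult.commute)
  have "surj L" unfolding L_def by (rule unitary_pencil_surj[OF U pencil_coeffs_differ[OF w]])
  then have "L (inv L (JK v)) = JK v" by (rule surj_f_inv_f)
  moreover have "Omega U JK w v = scaleC (2 * \<i>) (inv L (JK v))" by (simp add: Omega_def L_def)
  ultimately have "L (Omega U JK w v) = scaleC (2 * \<i>) (JK v)" by (simp only: lin)
  then show ?thesis unfolding L_def .
qed

text \<open>At w = i and w = -i the pencil degenerates to a multiple of 1, resp. of U.\<close>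
lemma Omega_at_i:
  fixes U :: "'k::{cvec,complete_space} \<Rightarrow> 'k"
  assumes "unitary_op U"
  shows "Omega U JK \<i> v = JK v"
proof -
  have "scaleC (2 * \<i>) (Omega U JK \<i> v) = scaleC (2 * \<i>) (JK v)"
    using Omega_pencil_eq[OF assms, of \<i> JK v] by simp
  then show ?thesis by (rule scaleC_cancel[rotated]) simp
qed

lemma Omega_at_minus_i:
  fixes U :: "'k::{cvec,complete_space} \<Rightarrow> 'k"
  assumes "unitary_op U"
  shows "U (Omega U JK (- \<i>) v) = JK v"
proof -
  have "scaleC (2 * \<i>) (U (Omega U JK (- \<i>) v)) = scaleC (2 * \<i>) (JK v)"
    using Omega_pencil_eq[OF assms, of "- \<i>" JK v] by simp
  then show ?thesis by (rule scaleC_cancel[rotated]) simp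
qed

text \<open>The resolvent vector y = (U - b(z))^-1 JK v, read off from \<Omega>(conj z).\<close>
definition resolvent_vec :: "('k::cvec \<Rightarrow> 'k) \<Rightarrow> (complex^'n \<Rightarrow> 'k) \<Rightarrow> complex \<Rightarrow> complex^'n \<Rightarrow> 'k" where
  "resolvent_vec U JK z v = scaleC ((\<i> + z) / (2 * \<i>)) (Omega U JK (cnj z) v)"

lemma resolvent_vec_eq:
  fixes U :: "'k::{cvec,complete_space} \<Rightarrow> 'k"
  assumes U: "unitary_op U" and z: "Im z > 0"
  shows "U (resolvent_vec U JK z v) - scaleC (bC z) (resolvent_vec U JK z v) = JK v"
proof -
  let ?\<Omega> = "Omega U JK (cnj z) v" and ?y = "resolvent_vec U JK z v"
  have zi: "\<i> + z \<noteq> 0" using z by (auto simp: complex_eq_iff)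
  have "scaleC (2 * \<i>) (U ?y) = scaleC (\<i> + z) (U ?\<Omega>)"
    using clinearD(2)[OF unitary_facts(1)[OF U]] by (simp add: resolvent_vec_def scaleC_scaleC add.commute)
  moreover have "scaleC (2 * \<i>) (scaleC (bC z) ?y) = - scaleC (\<i> - z) ?\<Omega>"
  proof -
    have "bC z * (\<i> + z) = z - \<i>" using zi by (simp add: bC_def add.commute)
    moreover have "2 * \<i> * (bC z * ((\<i> + z) / (2 * \<i>))) = bC z * (\<i> + z)"
      by (simp add: field_simps)
    ultimately have "2 * \<i> * (bC z * ((\<i> + z) / (2 * \<i>))) = - (\<i> - z)" by simp
    then show ?thesis by (simp only: resolvent_vec_def scaleC_scaleC scaleC_minus_left)
  qed
  ultimately have "scaleC (2 * \<i>) (U ?y - scaleC (bC z) ?y) = scaleC (2 * \<i>) (JK v)"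
    using Omega_pencil_eq[OF U, of "cnj z" JK v] z by (simp add: scaleC_diff_right add.commute)
  then show ?thesis by (rule scaleC_cancel[rotated]) simp
qed

text \<open>Dually, w = (1 - conj b(z) U)^-1 JK v is read off from \<Omega>(z).\<close>
definition coresolvent_vec :: "('k::cvec \<Rightarrow> 'k) \<Rightarrow> (complex^'n \<Rightarrow> 'k) \<Rightarrow> complex \<Rightarrow> complex^'n \<Rightarrow> 'k" where
  "coresolvent_vec U JK z v = scaleC ((\<i> - cnj z) / (2 * \<i>)) (Omega U JK z v)"

lemma coresolvent_vec_eq:
  fixes U :: "'k::{cvec,complete_space} \<Rightarrow> 'k"
  assumes U: "unitary_op U" and z: "Im z > 0"
  shows "coresolvent_vec U JK z v - scaleC (cnj (bC z)) (U (coresolvent_vec U JK z v)) = JK v"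
proof -
  let ?\<Omega> = "Omega U JK z v" and ?w = "coresolvent_vec U JK z v"
  have zi: "\<i> - cnj z \<noteq> 0" using z by (auto simp: complex_eq_iff)
  have "scaleC (2 * \<i>) ?w = scaleC (\<i> - cnj z) ?\<Omega>"
    by (simp add: coresolvent_vec_def scaleC_scaleC)
  moreover have "scaleC (2 * \<i>) (scaleC (cnj (bC z)) (U ?w)) = - scaleC (\<i> + cnj z) (U ?\<Omega>)"
  proof -
    have "cnj (bC z) * (\<i> - cnj z) = - (\<i> + cnj z)" using zi by (simp add: bC_def field_simps)
    moreover have "2 * \<i> * (cnj (bC z) * ((\<i> - cnj z) / (2 * \<i>))) = cnj (bC z) * (\<i> - cnj z)"
      by (simp add: field_simps)
    ultimately have "2 * \<i> * (cnj (bC z) * ((\<i> - cnj z) / (2 * \<i>))) = - (\<i> + cnj z)" by simp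
    then show ?thesis using clinearD(2)[OF unitary_facts(1)[OF U]]
      by (simp only: coresolvent_vec_def scaleC_scaleC scaleC_minus_left)
  qed
  ultimately have "scaleC (2 * \<i>) (?w - scaleC (cnj (bC z)) (U ?w)) = scaleC (2 * \<i>) (JK v)"
    using Omega_pencil_eq[OF U, of z JK v] z by (simp add: scaleC_diff_right)
  then show ?thesis by (rule scaleC_cancel[rotated]) simp
qed

lemma Omega_via_resolvents:
  assumes z: "Im z > 0"
  shows "Omega U JK (cnj z) v = scaleC (2 * \<i> / (\<i> + z)) (resolvent_vec U JK z v)"
    and "Omega U JK z v = scaleC (cnj (2 * \<i> / (\<i> + z))) (coresolvent_vec U JK z v)"
proof -
  have nz: "\<i> + z \<noteq> 0" "\<i> - cnj z \<noteq> 0" using z by (auto simp: complex_eq_iff)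
  have "cnj (2 * \<i> / (\<i> + z)) = 2 * \<i> / (\<i> - cnj z)"
  proof -
    have "cnj (2 * \<i> / (\<i> + z)) = - (2 * \<i>) / - (\<i> - cnj z)" by simp
    then show ?thesis by (simp only: minus_divide_divide)
  qed
  with nz show "Omega U JK (cnj z) v = scaleC (2 * \<i> / (\<i> + z)) (resolvent_vec U JK z v)"
    and "Omega U JK z v = scaleC (cnj (2 * \<i> / (\<i> + z))) (coresolvent_vec U JK z v)"
    by (simp_all add: resolvent_vec_def coresolvent_vec_def scaleC_scaleC scaleC_one)
qed

section \<open>Matrix algebra\<close>

lemma mat_mult_nth: "(mat c ** M) $ i $ j = c * (M $ i $ j :: 'a::comm_semiring_1)"
proof -
  have "(mat c ** M) $ i $ j = (\<Sum>k\<in>UNIV. (if i = k then c else 0) * M $ k $ j)"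
    by (simp add: matrix_matrix_mult_def mat_def)
  also have "\<dots> = (\<Sum>k\<in>UNIV. if i = k then c * M $ k $ j else 0)" by (rule sum.cong) auto
  finally show ?thesis by simp
qed

lemma mat_commute: "mat c ** M = M ** (mat c :: 'a::comm_semiring_1^'n^'n)"
proof -
  have "(M ** mat c) $ i $ j = M $ i $ j * c" for i j
  proof -
    have "(M ** mat c) $ i $ j = (\<Sum>k\<in>UNIV. M $ i $ k * (if k = j then c else 0))"
      by (simp add: matrix_matrix_mult_def mat_def)
    also have "\<dots> = (\<Sum>k\<in>UNIV. if k = j then M $ i $ k * c else 0)" by (rule sum.cong) auto
    finally show ?thesis by simp
  qed
  then show ?thesis by (simp add: vec_eq_iff mat_mult_nth mult.commute)
qed

lemma matrix_add_rdistrib: "(B + C) ** (A :: 'a::semiring_1^'n^'m) = B ** A + C ** A"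
  by (simp add: matrix_matrix_mult_def vec_eq_iff sum.distrib distrib_right)

lemma mat_mult_mat: "mat a ** mat b = (mat (a * b) :: 'a::comm_semiring_1^'n^'n)"
  by (simp add: vec_eq_iff mat_mult_nth) (simp add: mat_def)

lemma matrix_inv_props:
  fixes K :: "'a::comm_semiring_1^'n^'n"
  assumes "invertible K"
  shows "K ** matrix_inv K = mat 1" "matrix_inv K ** K = mat 1"
proof -
  have "\<exists>K'. K ** K' = mat 1 \<and> K' ** K = mat 1" using assms by (simp add: invertible_def)
  then have "K ** matrix_inv K = mat 1 \<and> matrix_inv K ** K = mat 1"
    unfolding matrix_inv_def by (rule someI_ex)
  then show "K ** matrix_inv K = mat 1" "matrix_inv K ** K = mat 1" by auto
qed

lemma commutes_with_affine:
  "A ** (mat 1 + mat b ** A) = (mat 1 + mat b ** A) ** (A :: 'a::comm_semiring_1^'n^'n)"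
proof -
  have "A ** (mat b ** A) = (mat b ** A) ** A" by (metis matrix_mul_assoc mat_commute)
  then show ?thesis by (simp add: matrix_add_ldistrib matrix_add_rdistrib)
qed

lemma commuting_quotient:
  fixes A C :: "'a::comm_ring_1^'n^'n"
  assumes AC: "A ** C = C ** A" and M: "invertible (mat s ** C)" and N: "invertible (mat r ** C)"
  shows "matrix_inv (mat s ** C) ** (mat s ** A) = (mat r ** A) ** matrix_inv (mat r ** C)"
proof -
  let ?M = "mat s ** C" and ?N = "mat r ** C"
  have swap: "(mat s ** A) ** ?N = ?M ** (mat r ** A)"
  proof -
    have "(mat s ** A) ** ?N = mat s ** ((A ** mat r) ** C)" by (simp add: matrix_mul_assoc)
    also have "A ** mat r = mat r ** A" by (rule mat_commute[symmetric])
    also have "mat s ** ((mat r ** A) ** C) = mat s ** (mat r ** (C ** A))"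
      by (simp only: matrix_mul_assoc[symmetric] AC)
    also have "\<dots> = (mat s ** C) ** (mat r ** A)"
      by (metis matrix_mul_assoc mat_commute)
    finally show ?thesis .
  qed
  have "matrix_inv ?M ** (mat s ** A) = matrix_inv ?M ** (mat s ** A) ** (?N ** matrix_inv ?N)"
    by (simp add: matrix_inv_props(1)[OF N])
  also have "\<dots> = matrix_inv ?M ** ((mat s ** A) ** ?N) ** matrix_inv ?N"
    by (simp add: matrix_mul_assoc)
  also have "\<dots> = (matrix_inv ?M ** ?M) ** (mat r ** A) ** matrix_inv ?N"
    unfolding swap by (simp add: matrix_mul_assoc)
  finally show ?thesis by (simp add: matrix_inv_props(2)[OF M])
qed

section \<open>The kernel matrices\<close>

lemma unitary_pairings:
  assumes U: "unitary_op U" and w: "w - scaleC (cnj b) (U w) = x" and y: "U y - scaleC b y = x'"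
  shows "cinner w x' = cinner x (U y)" and "cinner (U w) x' = cinner x y"
  unfolding w[symmetric] y[symmetric] by (simp_all add: cinner_simps unitary_facts(3)[OF U])

definition gram_A :: "('k::cvec \<Rightarrow> 'k) \<Rightarrow> (complex^'n \<Rightarrow> 'k) \<Rightarrow> complex \<Rightarrow> complex^'n^'n" where
  "gram_A U JK z = (\<chi> j k. cinner (JK (axis j 1)) (resolvent_vec U JK z (axis k 1)))"

definition gram_C :: "('k::cvec \<Rightarrow> 'k) \<Rightarrow> (complex^'n \<Rightarrow> 'k) \<Rightarrow> complex \<Rightarrow> complex^'n^'n" where
  "gram_C U JK z = (\<chi> j k. cinner (JK (axis j 1)) (U (resolvent_vec U JK z (axis k 1))))"

lemma Kern_eq_gram:
  fixes U :: "'k::{cvec,complete_space} \<Rightarrow> 'k" and JK :: "complex^'n \<Rightarrow> 'k"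
  assumes U: "unitary_op U" and z: "Im z > 0"
  shows "Kern U JK (cnj z) (- \<i>) = mat (2 * \<i> / (\<i> + z)) ** gram_C U JK z"
    and "Kern U JK \<i> z = mat (2 * \<i> / (\<i> + z)) ** gram_C U JK z"
    and "Kern U JK (cnj z) \<i> = mat (2 * \<i> / (\<i> + z)) ** gram_A U JK z"
    and "Kern U JK (- \<i>) z = mat (2 * \<i> / (\<i> + z)) ** gram_A U JK z"
proof -
  let ?y = "resolvent_vec U JK z" and ?w = "coresolvent_vec U JK z"
    and ?v = "Omega U JK (- \<i>)"
  note Omega = Omega_via_resolvents[OF z] Omega_at_i[OF U]
  note pair = unitary_pairings[OF U coresolvent_vec_eq[OF U z] resolvent_vec_eq[OF U z]]
  have U_cinner: "cinner (U a) (U c) = cinner a c" for a c by (rule unitary_facts(3)[OF U])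
  have "cinner (?v j) (?y k) = cinner (JK j) (U (?y k))" for j k
    using U_cinner[of "?v j" "?y k"] by (simp add: Omega_at_minus_i[OF U])
  moreover have "cinner (?w j) (?v k) = cinner (JK j) (?y k)" for j k
  proof -
    have "cinner (?w j) (?v k) = cinner (U (?w j)) (JK k)"
      using U_cinner[of "?w j" "?v k"] by (simp add: Omega_at_minus_i[OF U])
    also have "\<dots> = cinner (JK j) (?y k)" by (rule pair(2))
    finally show ?thesis .
  qed
  ultimately show "Kern U JK (cnj z) (- \<i>) = mat (2 * \<i> / (\<i> + z)) ** gram_C U JK z"
    and "Kern U JK \<i> z = mat (2 * \<i> / (\<i> + z)) ** gram_C U JK z"
    and "Kern U JK (cnj z) \<i> = mat (2 * \<i> / (\<i> + z)) ** gram_A U JK z"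
    and "Kern U JK (- \<i>) z = mat (2 * \<i> / (\<i> + z)) ** gram_A U JK z"
    by (simp_all add: vec_eq_iff Kern_def mat_mult_nth gram_A_def gram_C_def Omega pair(1)
        cinner_scaleC_left cinner_scaleC_right)
qed

text \<open>For an orthonormal family x_k, U y_k = x_k + b y_k gives C = 1 + b A.\<close>
lemma gram_C_eq:
  fixes U :: "'k::{cvec,complete_space} \<Rightarrow> 'k" and JK :: "complex^'n \<Rightarrow> 'k"
  assumes U: "unitary_op U" and z: "Im z > 0"
    and ortho: "\<And>j k. cinner (JK (axis j 1)) (JK (axis k 1)) = (if j = k then 1 else 0)"
  shows "gram_C U JK z = mat 1 + mat (bC z) ** gram_A U JK z"
proof -
  have "U (resolvent_vec U JK z v) = JK v + scaleC (bC z) (resolvent_vec U JK z v)" for v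
    using resolvent_vec_eq[OF U z, of JK v] by (simp add: diff_eq_eq)
  then show ?thesis
    by (simp add: vec_eq_iff gram_A_def gram_C_def mat_mult_nth cinner_simps ortho) (simp add: mat_def)
qed

lemma (in unitary_spectral) G_U_eq_gram:
  fixes JK :: "complex^'n \<Rightarrow> 'k"
  assumes z: "Im z > 0"
    and ortho: "\<And>j k. cinner (JK (axis j 1)) (JK (axis k 1)) = (if j = k then 1 else 0)"
  shows "G_U P JK z + mat 1 = mat 2 ** gram_C U JK z"
    and "G_U P JK z - mat 1 = mat (2 * bC z) ** gram_A U JK z"
proof -
  let ?y = "resolvent_vec U JK z"
  have G: "G_U P JK z $ j $ k = cinner (JK (axis j 1)) (JK (axis k 1) + scaleC (2 * bC z) (?y (axis k 1)))"
    for j k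
    using spec_integral_cayley[OF bC_norm_less_one[OF z]
        resolvent_vec_eq[OF unitary z, symmetric] resolvent_vec_eq[OF unitary z, symmetric]]
    by (simp add: G_U_def)
  show "G_U P JK z + mat 1 = mat 2 ** gram_C U JK z"
    unfolding gram_C_eq[OF unitary z ortho]
    by (simp add: vec_eq_iff G mat_mult_nth cinner_simps ortho gram_A_def) (simp add: mat_def algebra_simps)
  show "G_U P JK z - mat 1 = mat (2 * bC z) ** gram_A U JK z"
    by (simp add: vec_eq_iff G mat_mult_nth cinner_simps ortho gram_A_def) (simp add: mat_def)
qed

theorem mainTheorem20:
  fixes D :: "'h::{cvec, complete_space} set" and B :: "'h \<Rightarrow> 'h"
    and J :: "complex^'n \<Rightarrow> 'h"
    and emb :: "'h \<Rightarrow> 'k::{cvec, complete_space}" and U :: "'k \<Rightarrow> 'k"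
    and P :: "complex set \<Rightarrow> 'k \<Rightarrow> 'k"
    and z :: complex
  assumes "separable_hilbert TYPE('h)"
    and "in_S CARD('n) D B"
    and "\<forall>x y. J (x + y) = J x + J y" and "\<forall>c x. J (c *s x) = scaleC c (J x)"
    and "\<forall>x. norm (J x) = norm x"
    and "range J \<subseteq> defect D B (- \<i>)"
    and "in_Ext D B emb U"
    and "spectral_measure_of U P"
    and "Im z > 0"
    and "invertible (Kern U (emb \<circ> J) (cnj z) (- \<i>))"
    and "invertible (Kern U (emb \<circ> J) \<i> z)"
    and "invertible (G_U P (emb \<circ> J) z + mat 1)"
  shows "mat (bC z) ** matrix_inv (Kern U (emb \<circ> J) (cnj z) (- \<i>)) ** Kern U (emb \<circ> J) (cnj z) \<i>
           = Phi P (emb \<circ> J) z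
       \<and> Phi P (emb \<circ> J) z
           = mat (bC z) ** matrix_inv (Kern U (emb \<circ> J) \<i> z) ** Kern U (emb \<circ> J) (- \<i>) z"
proof -
  have U: "unitary_op U" and emb: "clinear emb" "\<And>x. norm (emb x) = norm x"
    using assms(7) by (auto simp: in_Ext_def)
  interpret unitary_spectral U P using U assms(8) by unfold_locales
  have ortho: "cinner ((emb \<circ> J) (axis j 1)) ((emb \<circ> J) (axis k 1)) = (if j = k then 1 else 0)" for j k
    by (rule isometry_axis_orthonormal) (use assms(3-5) clinearD[OF emb(1)] emb(2) in auto)
  let ?A = "gram_A U (emb \<circ> J) z" and ?C = "gram_C U (emb \<circ> J) z"
  have commute: "?A ** ?C = ?C ** ?A"
    unfolding gram_C_eq[OF U assms(9) ortho] by (rule commutes_with_affine)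
  have G: "G_U P (emb \<circ> J) z + mat 1 = mat 2 ** ?C" "G_U P (emb \<circ> J) z - mat 1 = mat (2 * bC z) ** ?A"
    using G_U_eq_gram[OF assms(9) ortho] .
  have quotient: "mat (bC z) ** matrix_inv (mat s ** ?C) ** (mat s ** ?A) = Phi P (emb \<circ> J) z"
    if "invertible (mat s ** ?C)" for s
  proof -
    have "invertible (mat 2 ** ?C)" using assms(12) G(1) by simp
    then have "mat (bC z) ** matrix_inv (mat s ** ?C) ** (mat s ** ?A)
        = mat (bC z) ** ((mat 2 ** ?A) ** matrix_inv (mat 2 ** ?C))"
      by (simp add: commuting_quotient[OF commute that, symmetric] matrix_mul_assoc)
    also have "\<dots> = (mat (2 * bC z) ** ?A) ** matrix_inv (mat 2 ** ?C)"
      by (simp add: matrix_mul_assoc mat_mult_mat mult.commute)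
    finally show ?thesis by (simp add: Phi_def G)
  qed
  show ?thesis
    using quotient assms(10,11) by (simp add: Kern_eq_gram[OF U assms(9)])
qed

end
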